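(* The labelled rule (C), with premise $\Gamma, \mathbf{k}\leq \Diamond^{b}\mathbf{j} \vdash \Diamond \mathbf{k}\leq \mathbf{m}, \Delta$ and conclusion $\Gamma, \mathbf{h}\leq \Diamond\mathbf{j} \vdash \Diamond^{b}\mathbf{h}\leq \mathbf{m}, \Delta$ (where $\mathbf{k}$ does not occur in $\Gamma,\Delta$), is sound on the canonical extension $\mathbb{A}^\delta$ of any $\mathcal{L}$-algebra $\mathbb{A}$ such that $\mathbb{A}\models \Diamond\Box p\leq\Box\Diamond p$.
   Context: An $\mathcal{L}$-algebra is a bounded lattice with a finitely join-preserving $\Diamond$ and finitely meet-preserving $\Box$; its canonical extension $\mathbb{A}^\delta=(L^\delta,\Box^\pi,\Diamond^\sigma)$ is complete, with $\Diamond^\sigma$ having a right adjoint $\blacksquare$ and $\Box^\pi$ having a left adjoint denoted $\Diamond^{b}$ ($\Diamond^{b}u\leq v$ iff $u\leq\Box v$). Nominals range over a completely join-generating subset and conominals over a completely meet-generating subset of $\mathbb{A}^\delta$. A sequent $\Gamma\vdash\Delta$ of inequalities (labelled formulas such as $\mathbf{j}\leq A$, $A\leq\mathbf{m}$ and pure structures such as $\mathbf{j}\leq\mathbf{T}$, $\mathbf{T}\leq\mathbf{m}$) is interpreted as: every assignment of proposition variables, nominals and conominals satisfying all inequalities in $\Gamma$ satisfies some inequality in $\Delta$. Soundness uses that the axiom (C) is canonical (hence valid on $\mathbb{A}^\delta$) and that on $\mathbb{A}^\delta$ it is equivalent to $\forall\mathbf{j}\forall\mathbf{m}(\Diamond\Diamond^{b}\mathbf{j}\leq\mathbf{m}\Rightarrow\Diamond^{b}\Diamond\mathbf{j}\leq\mathbf{m})$.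 *)

theory Defs
  imports Main
begin

definition L_algebra :: "('a::bounded_lattice \<Rightarrow> 'a) \<Rightarrow> ('a \<Rightarrow> 'a) \<Rightarrow> bool" where
  "L_algebra dia box \<longleftrightarrow>
     dia bot = bot \<and> (\<forall>a b. dia (sup a b) = sup (dia a) (dia b)) \<and>
     box top = top \<and> (\<forall>a b. box (inf a b) = inf (box a) (box b))"

definition closed_elems :: "('a \<Rightarrow> 'c::complete_lattice) \<Rightarrow> 'c set" where
  "closed_elems e = {Inf (e ` S) | S. True}"

definition open_elems :: "('a \<Rightarrow> 'c::complete_lattice) \<Rightarrow> 'c set" where
  "open_elems e = {Sup (e ` S) | S. True}"

definition canonical_extension :: "('a::bounded_lattice \<Rightarrow> 'c::complete_lattice) \<Rightarrow> bool" where
  "canonical_extension e \<longleftrightarrow>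
     inj e \<and> e bot = bot \<and> e top = top \<and>
     (\<forall>a b. e (sup a b) = sup (e a) (e b)) \<and> (\<forall>a b. e (inf a b) = inf (e a) (e b)) \<and>
     (\<forall>u. (\<exists>S \<subseteq> closed_elems e. u = Sup S) \<and> (\<exists>S \<subseteq> open_elems e. u = Inf S)) \<and>
     (\<forall>S T. Inf (e ` S) \<le> Sup (e ` T) \<longrightarrow>
        (\<exists>S' T'. finite S' \<and> S' \<subseteq> S \<and> finite T' \<and> T' \<subseteq> T \<and> Inf (e ` S') \<le> Sup (e ` T')))"

definition sigma_ext :: "('a::bounded_lattice \<Rightarrow> 'c::complete_lattice) \<Rightarrow> ('a \<Rightarrow> 'a) \<Rightarrow> 'c \<Rightarrow> 'c" where
  "sigma_ext e f u = Sup {Inf {e (f a) | a. k \<le> e a} | k. k \<in> closed_elems e \<and> k \<le> u}"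

definition pi_ext :: "('a::bounded_lattice \<Rightarrow> 'c::complete_lattice) \<Rightarrow> ('a \<Rightarrow> 'a) \<Rightarrow> 'c \<Rightarrow> 'c" where
  "pi_ext e g u = Inf {Sup {e (g a) | a. e a \<le> w} | w. w \<in> open_elems e \<and> u \<le> w}"

text \<open>left adjoint of box^pi (diamond^b): diab u \<le> v iff u \<le> box^pi v\<close>
definition diab :: "('a::bounded_lattice \<Rightarrow> 'c::complete_lattice) \<Rightarrow> ('a \<Rightarrow> 'a) \<Rightarrow> 'c \<Rightarrow> 'c" where
  "diab e box u = Inf {v. u \<le> pi_ext e box v}"

definition join_generating :: "'c::complete_lattice set \<Rightarrow> bool" where
  "join_generating J \<longleftrightarrow> (\<forall>u. \<exists>S \<subseteq> J. u = Sup S)"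

definition meet_generating :: "'c::complete_lattice set \<Rightarrow> bool" where
  "meet_generating M \<longleftrightarrow> (\<forall>u. \<exists>S \<subseteq> M. u = Inf S)"

record 'c asg =
  pv :: "nat \<Rightarrow> 'c"
  nom :: "nat \<Rightarrow> 'c"
  conom :: "nat \<Rightarrow> 'c"

definition admissible :: "'c set \<Rightarrow> 'c set \<Rightarrow> 'c asg \<Rightarrow> bool" where
  "admissible J M \<sigma> \<longleftrightarrow> range (nom \<sigma>) \<subseteq> J \<and> range (conom \<sigma>) \<subseteq> M"

text \<open>An inequality is represented semantically by its truth condition on assignments.\<close>
definition seq_valid :: "'c set \<Rightarrow> 'c set \<Rightarrow> ('c asg \<Rightarrow> bool) set \<Rightarrow> ('c asg \<Rightarrow> bool) set \<Rightarrow> bool" where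
  "seq_valid J M \<Gamma> \<Delta> \<longleftrightarrow>
     (\<forall>\<sigma>. admissible J M \<sigma> \<longrightarrow> (\<forall>g\<in>\<Gamma>. g \<sigma>) \<longrightarrow> (\<exists>d\<in>\<Delta>. d \<sigma>))"

text \<open>The nominal with index k does not occur in an inequality: its truth value does not
  depend on the value assigned to k.\<close>
definition nom_free :: "'c set \<Rightarrow> nat \<Rightarrow> ('c asg \<Rightarrow> bool) \<Rightarrow> bool" where
  "nom_free J k \<phi> \<longleftrightarrow>
     (\<forall>\<sigma> x. x \<in> J \<longrightarrow> (\<phi> (\<sigma>\<lparr>nom := (nom \<sigma>)(k := x)\<rparr>) \<longleftrightarrow> \<phi> \<sigma>))"

end

theory Submission
  imports Defs
begin

text \<open>Unfolding the sequents, soundness amounts to: if dia^sigma k <= m for every nominal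
  k <= dia^b j, then dia^sigma j <= box^pi m, which turns h <= dia^sigma j into dia^b h <= m.
  As nominals join-generate and dia^sigma preserves arbitrary joins, the hypothesis says
  dia^sigma (dia^b j) <= m. The conclusion is then the instance of canonicity of (C) that is
  needed, proved directly by compactness: for closed c <= j and open w >= m, the closed element
  dia^b c lies below some a with dia a <= w; hence c <= box a, and
  dia^sigma c <= dia (box a) <= box (dia a) <= box^pi w.\<close>

lemma finite_subset_upper_bound:
  fixes I :: "'a::bounded_lattice set"
  assumes "finite A" "A \<subseteq> I" "bot \<in> I" "\<And>a b. a \<in> I \<Longrightarrow> b \<in> I \<Longrightarrow> sup a b \<in> I"
  shows "\<exists>b\<in>I. \<forall>a\<in>A. a \<le> b"
  using assms(1,2)
proof (induction A rule: finite_induct)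
  case empty
  then show ?case using assms(3) by blast
next
  case (insert x A)
  then obtain b where "b \<in> I" "\<forall>a\<in>A. a \<le> b" by blast
  with insert.prems assms(4) show ?case
    by (intro bexI[of _ "sup x b"]) (auto intro: le_supI2)
qed

lemma finite_subset_lower_bound:
  fixes F :: "'a::bounded_lattice set"
  assumes "finite A" "A \<subseteq> F" "top \<in> F" "\<And>a b. a \<in> F \<Longrightarrow> b \<in> F \<Longrightarrow> inf a b \<in> F"
  shows "\<exists>b\<in>F. \<forall>a\<in>A. b \<le> a"
  using assms(1,2)
proof (induction A rule: finite_induct)
  case empty
  then show ?case using assms(3) by blast
next
  case (insert x A)
  then obtain b where "b \<in> F" "\<forall>a\<in>A. b \<le> a" by blast
  with insert.prems assms(4) show ?case
    by (intro bexI[of _ "inf x b"]) (auto intro: le_infI2)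
qed

lemma join_generating_Sup_below:
  assumes "join_generating J"
  shows "Sup {x \<in> J. x \<le> u} = u"
proof -
  obtain S where "S \<subseteq> J" "u = Sup S"
    using assms unfolding join_generating_def by blast
  then show ?thesis
    by (intro order.antisym) (auto intro: Sup_subset_mono Sup_upper Sup_least)
qed

definition sigma_closed :: "('a::bounded_lattice \<Rightarrow> 'c::complete_lattice) \<Rightarrow> ('a \<Rightarrow> 'a) \<Rightarrow> 'c \<Rightarrow> 'c" where
  "sigma_closed e f c = Inf {e (f a) | a. c \<le> e a}"

definition pi_open :: "('a::bounded_lattice \<Rightarrow> 'c::complete_lattice) \<Rightarrow> ('a \<Rightarrow> 'a) \<Rightarrow> 'c \<Rightarrow> 'c" where
  "pi_open e g w = Sup {e (g a) | a. e a \<le> w}"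

lemma sigma_ext_eq_Sup_sigma_closed:
  "sigma_ext e f u = Sup {sigma_closed e f c | c. c \<in> closed_elems e \<and> c \<le> u}"
  unfolding sigma_ext_def sigma_closed_def ..

lemma pi_ext_eq_Inf_pi_open:
  "pi_ext e g u = Inf {pi_open e g w | w. w \<in> open_elems e \<and> u \<le> w}"
  unfolding pi_ext_def pi_open_def ..

lemma sigma_closed_le_sigma_ext:
  "c \<in> closed_elems e \<Longrightarrow> c \<le> u \<Longrightarrow> sigma_closed e f c \<le> sigma_ext e f u"
  unfolding sigma_ext_eq_Sup_sigma_closed by (rule Sup_upper) blast

lemma pi_ext_le_pi_open:
  "w \<in> open_elems e \<Longrightarrow> u \<le> w \<Longrightarrow> pi_ext e g u \<le> pi_open e g w"
  unfolding pi_ext_eq_Inf_pi_open by (rule Inf_lower) blast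

lemma diab_mono: "u \<le> v \<Longrightarrow> diab e g u \<le> diab e g v"
  unfolding diab_def by (rule Inf_superset_mono) (auto intro: order_trans)

lemma diab_le: "u \<le> pi_ext e g v \<Longrightarrow> diab e g u \<le> v"
  unfolding diab_def by (rule Inf_lower) simp

locale canonical_ext =
  fixes e :: "'a::bounded_lattice \<Rightarrow> 'c::complete_lattice"
  assumes canonical: "canonical_extension e"
begin

lemma embedding_bot [simp]: "e bot = bot"
  and embedding_top [simp]: "e top = top"
  and embedding_sup [simp]: "e (sup a b) = sup (e a) (e b)"
  and embedding_inf [simp]: "e (inf a b) = inf (e a) (e b)"
  using canonical unfolding canonical_extension_def by auto

lemma embedding_le_iff [simp]: "e a \<le> e b \<longleftrightarrow> a \<le> b"
proof -
  have "inj e" using canonical unfolding canonical_extension_def by blast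
  then have "inf (e a) (e b) = e a \<longleftrightarrow> inf a b = a"
    by (metis embedding_inf inj_eq)
  then show ?thesis by (simp add: le_iff_inf)
qed

lemma compact:
  "Inf (e ` S) \<le> Sup (e ` T) \<Longrightarrow>
     \<exists>S' T'. finite S' \<and> S' \<subseteq> S \<and> finite T' \<and> T' \<subseteq> T \<and> Inf (e ` S') \<le> Sup (e ` T')"
  using canonical unfolding canonical_extension_def by blast

text \<open>The monotone images of a filter-like and of an ideal-like set are directed, so the
  finite witness of compactness collapses to a single pair.\<close>
lemma compact_filter_ideal:
  fixes f g :: "'b::bounded_lattice \<Rightarrow> 'a"
  assumes "Inf (e ` f ` F) \<le> Sup (e ` g ` I)"
    and "mono f" "mono g"
    and "top \<in> F" "\<And>a b. a \<in> F \<Longrightarrow> b \<in> F \<Longrightarrow> inf a b \<in> F"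
    and "bot \<in> I" "\<And>a b. a \<in> I \<Longrightarrow> b \<in> I \<Longrightarrow> sup a b \<in> I"
  shows "\<exists>a\<in>F. \<exists>b\<in>I. f a \<le> g b"
proof -
  obtain S T where ST: "finite S" "S \<subseteq> f ` F" "finite T" "T \<subseteq> g ` I"
      "Inf (e ` S) \<le> Sup (e ` T)"
    using compact[OF assms(1)] by blast
  obtain F' where F': "F' \<subseteq> F" "finite F'" "S = f ` F'"
    using ST(1,2) by (meson finite_subset_image)
  obtain I' where I': "I' \<subseteq> I" "finite I'" "T = g ` I'"
    using ST(3,4) by (meson finite_subset_image)
  obtain a where a: "a \<in> F" "\<forall>x\<in>F'. a \<le> x"
    using finite_subset_lower_bound[of F' F] F'(1,2) assms(4,5) by blast
  obtain b where b: "b \<in> I" "\<forall>y\<in>I'. y \<le> b"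
    using finite_subset_upper_bound[of I' I] I'(1,2) assms(6,7) by blast
  have "e (f a) \<le> Inf (e ` S)"
    using a(2) assms(2) unfolding F'(3) by (auto intro!: Inf_greatest dest: monoD)
  also have "\<dots> \<le> Sup (e ` T)" by (fact ST(5))
  also have "\<dots> \<le> e (g b)"
    using b(2) assms(3) unfolding I'(3) by (auto intro!: Sup_least dest: monoD)
  finally show ?thesis using a(1) b(1) by auto
qed

lemma closed_eq_Inf_above:
  assumes "c \<in> closed_elems e"
  shows "c = Inf (e ` {a. c \<le> e a})"
proof -
  obtain S where S: "c = Inf (e ` S)"
    using assms unfolding closed_elems_def by blast
  then have "S \<subseteq> {a. c \<le> e a}" by (auto intro: Inf_lower)
  then show ?thesis
    by (intro order.antisym Inf_greatest) (auto simp: S intro: Inf_superset_mono)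
qed

lemma open_eq_Sup_below:
  assumes "w \<in> open_elems e"
  shows "w = Sup (e ` {a. e a \<le> w})"
proof -
  obtain S where S: "w = Sup (e ` S)"
    using assms unfolding open_elems_def by blast
  then have "S \<subseteq> {a. e a \<le> w}" by (auto intro: Sup_upper)
  then show ?thesis
    by (intro order.antisym Sup_least) (auto simp: S intro: Sup_subset_mono)
qed

lemma Inf_image_closed: "Inf (e ` S) \<in> closed_elems e"
  unfolding closed_elems_def by blast

lemma Sup_closed_below: "Sup {c \<in> closed_elems e. c \<le> u} = u"
proof -
  obtain S where "S \<subseteq> closed_elems e" "u = Sup S"
    using canonical unfolding canonical_extension_def by blast
  then show ?thesis
    by (intro order.antisym) (auto intro: Sup_subset_mono Sup_upper Sup_least)
qed

lemma Inf_open_above: "Inf {w \<in> open_elems e. u \<le> w} = u"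
proof -
  obtain S where "S \<subseteq> open_elems e" "u = Inf S"
    using canonical unfolding canonical_extension_def by blast
  then show ?thesis
    by (intro order.antisym) (auto intro: Inf_superset_mono Inf_lower Inf_greatest)
qed

end

locale L_canonical_ext = canonical_ext e
  for e :: "'a::bounded_lattice \<Rightarrow> 'c::complete_lattice" +
  fixes dia box :: "'a \<Rightarrow> 'a"
  assumes L_algebra: "L_algebra dia box"
begin

lemma dia_bot [simp]: "dia bot = bot"
  and dia_sup [simp]: "dia (sup a b) = sup (dia a) (dia b)"
  and box_top [simp]: "box top = top"
  and box_inf [simp]: "box (inf a b) = inf (box a) (box b)"
  using L_algebra unfolding L_algebra_def by auto

lemma mono_dia: "mono dia"
  by (rule monoI) (metis dia_sup le_iff_sup)

lemma mono_box: "mono box"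
  by (rule monoI) (metis box_inf le_iff_inf)

lemma sigma_closed_le_openE:
  assumes "w \<in> open_elems e" "sigma_closed e dia c \<le> w"
  obtains a where "c \<le> e a" "e (dia a) \<le> w"
proof -
  have "Inf (e ` dia ` {a. c \<le> e a}) = sigma_closed e dia c"
    unfolding sigma_closed_def by (rule arg_cong[where f = Inf]) blast
  also have "\<dots> \<le> w" by (fact assms(2))
  also have "w = Sup (e ` (\<lambda>a. a) ` {a. e a \<le> w})"
    unfolding image_ident by (rule open_eq_Sup_below[OF assms(1)])
  finally have "Inf (e ` dia ` {a. c \<le> e a}) \<le> Sup (e ` (\<lambda>a. a) ` {a. e a \<le> w})" .
  then have "\<exists>a\<in>{a. c \<le> e a}. \<exists>b\<in>{a. e a \<le> w}. dia a \<le> b"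
    by (rule compact_filter_ideal) (auto simp: mono_dia mono_on_ident)
  then obtain a b where "c \<le> e a" "e b \<le> w" "dia a \<le> b" by blast
  then show thesis
    by (meson embedding_le_iff order_trans that)
qed

lemma pi_ext_embedding: "pi_ext e box (e a) = e (box a)"
proof (rule order.antisym)
  have "e a = Sup (e ` {a})" by simp
  then have "e a \<in> open_elems e"
    unfolding open_elems_def by blast
  then have "pi_ext e box (e a) \<le> pi_open e box (e a)"
    by (simp add: pi_ext_le_pi_open)
  also have "\<dots> \<le> e (box a)"
    unfolding pi_open_def by (rule Sup_least) (auto intro: monoD[OF mono_box])
  finally show "pi_ext e box (e a) \<le> e (box a)" .
  show "e (box a) \<le> pi_ext e box (e a)"
    unfolding pi_ext_eq_Inf_pi_open pi_open_def by (rule Inf_greatest) (auto intro: Sup_upper)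
qed

lemma diab_closed:
  assumes "c \<in> closed_elems e"
  shows "diab e box c = Inf (e ` {a. c \<le> e (box a)})"
proof (rule order.antisym)
  show "diab e box c \<le> Inf (e ` {a. c \<le> e (box a)})"
  proof (rule Inf_greatest)
    fix x
    assume "x \<in> e ` {a. c \<le> e (box a)}"
    then obtain a where "x = e a" "c \<le> pi_ext e box (e a)"
      by (auto simp: pi_ext_embedding)
    then show "diab e box c \<le> x" by (simp add: diab_le)
  qed
  show "Inf (e ` {a. c \<le> e (box a)}) \<le> diab e box c"
    unfolding diab_def
  proof (rule Inf_greatest)
    fix v
    assume "v \<in> {v. c \<le> pi_ext e box v}"
    then have c_le: "c \<le> pi_ext e box v" by simp
    have "Inf (e ` {a. c \<le> e (box a)}) \<le> w" if w: "w \<in> open_elems e" "v \<le> w" for w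
    proof -
      have "Inf (e ` (\<lambda>a. a) ` {a. c \<le> e a}) = c"
        unfolding image_ident by (rule closed_eq_Inf_above[OF assms, symmetric])
      also have "c \<le> pi_ext e box v" by (fact c_le)
      also have "\<dots> \<le> pi_open e box w" by (rule pi_ext_le_pi_open[OF w])
      also have "\<dots> = Sup (e ` box ` {a. e a \<le> w})"
        unfolding pi_open_def by (rule arg_cong[where f = Sup]) blast
      finally have "\<exists>a\<in>{a. c \<le> e a}. \<exists>b\<in>{a. e a \<le> w}. a \<le> box b"
        by (rule compact_filter_ideal) (auto simp: mono_box mono_on_ident)
      then obtain b where "c \<le> e (box b)" "e b \<le> w"
        by (meson embedding_le_iff mem_Collect_eq order_trans)
      then have "Inf (e ` {a. c \<le> e (box a)}) \<le> e b"
        by (auto intro: Inf_lower)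
      then show ?thesis using \<open>e b \<le> w\<close> by (rule order_trans)
    qed
    then show "Inf (e ` {a. c \<le> e (box a)}) \<le> v"
      by (subst Inf_open_above[symmetric, of v]) (auto intro: Inf_greatest)
  qed
qed

lemma diab_closed_le_iff:
  assumes "c \<in> closed_elems e"
  shows "diab e box c \<le> e a \<longleftrightarrow> c \<le> e (box a)"
proof
  assume "diab e box c \<le> e a"
  then have "Inf (e ` (\<lambda>b. b) ` {b. c \<le> e (box b)}) \<le> e a"
    unfolding image_ident diab_closed[OF assms] .
  also have "e a = Sup (e ` (\<lambda>b. b) ` {b. b \<le> a})"
    by (auto intro!: order.antisym Sup_least Sup_upper)
  finally have "\<exists>a'\<in>{b. c \<le> e (box b)}. \<exists>b\<in>{b. b \<le> a}. a' \<le> b"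
    by (rule compact_filter_ideal) (auto simp: mono_on_ident)
  then obtain a' where "c \<le> e (box a')" "a' \<le> a"
    by auto
  then show "c \<le> e (box a)"
    by (meson embedding_le_iff monoD mono_box order_trans)
next
  assume "c \<le> e (box a)"
  then show "diab e box c \<le> e a"
    by (simp add: diab_le pi_ext_embedding)
qed

lemma le_Sup_dia_preimage_if_sigma_ext_le:
  assumes "w \<in> open_elems e" "sigma_ext e dia x \<le> w"
  shows "x \<le> Sup (e ` {a. e (dia a) \<le> w})"
proof -
  have "d \<le> Sup (e ` {a. e (dia a) \<le> w})" if "d \<in> closed_elems e" "d \<le> x" for d
  proof -
    have "sigma_closed e dia d \<le> w"
      using sigma_closed_le_sigma_ext[OF that] assms(2) by (rule order_trans)
    then obtain a where "d \<le> e a" "e (dia a) \<le> w"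
      using assms(1) sigma_closed_le_openE by blast
    then have "e a \<le> Sup (e ` {a. e (dia a) \<le> w})" by (auto intro: Sup_upper)
    with \<open>d \<le> e a\<close> show ?thesis by (rule order_trans)
  qed
  then show ?thesis
    by (subst Sup_closed_below[symmetric, of x]) (auto intro: Sup_least)
qed

lemma sigma_closed_le_open_if_le_Sup:
  assumes "c \<in> closed_elems e" "c \<le> Sup X"
    and "w \<in> open_elems e" "\<forall>x\<in>X. sigma_ext e dia x \<le> w"
  shows "sigma_closed e dia c \<le> w"
proof -
  let ?A = "{a. e (dia a) \<le> w}"
  have "Sup X \<le> Sup (e ` ?A)"
    using assms(3,4) le_Sup_dia_preimage_if_sigma_ext_le by (blast intro: Sup_least)
  with assms(2) have "c \<le> Sup (e ` ?A)" by (rule order_trans)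
  then have "Inf (e ` (\<lambda>a. a) ` {a. c \<le> e a}) \<le> Sup (e ` (\<lambda>a. a) ` ?A)"
    unfolding image_ident closed_eq_Inf_above[OF assms(1), symmetric] .
  then have "\<exists>a\<in>{a. c \<le> e a}. \<exists>b\<in>?A. a \<le> b"
    by (rule compact_filter_ideal) (auto simp: mono_on_ident)
  then obtain b where "c \<le> e b" "e (dia b) \<le> w"
    by (meson embedding_le_iff mem_Collect_eq order_trans)
  then have "sigma_closed e dia c \<le> e (dia b)"
    unfolding sigma_closed_def by (auto intro: Inf_lower)
  then show ?thesis using \<open>e (dia b) \<le> w\<close> by (rule order_trans)
qed

lemma sigma_ext_Sup_le: "sigma_ext e dia (Sup X) \<le> Sup (sigma_ext e dia ` X)"
proof -
  let ?s = "Sup (sigma_ext e dia ` X)"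
  have "sigma_closed e dia c \<le> ?s" if "c \<in> closed_elems e" "c \<le> Sup X" for c
  proof (subst Inf_open_above[symmetric, of ?s], rule Inf_greatest)
    fix w
    assume w: "w \<in> {w \<in> open_elems e. ?s \<le> w}"
    then have "\<forall>x\<in>X. sigma_ext e dia x \<le> w"
      by (auto intro: SUP_upper order_trans)
    with that w show "sigma_closed e dia c \<le> w"
      by (auto intro: sigma_closed_le_open_if_le_Sup)
  qed
  then show ?thesis
    unfolding sigma_ext_eq_Sup_sigma_closed[of e dia "Sup X"] by (auto intro: Sup_least)
qed

lemma sigma_ext_le_if_join_generating:
  assumes "join_generating J" "\<forall>x\<in>J. x \<le> u \<longrightarrow> sigma_ext e dia x \<le> v"
  shows "sigma_ext e dia u \<le> v"
proof -
  have "sigma_ext e dia u = sigma_ext e dia (Sup {x \<in> J. x \<le> u})"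
    by (simp only: join_generating_Sup_below[OF assms(1)])
  also have "\<dots> \<le> Sup (sigma_ext e dia ` {x \<in> J. x \<le> u})"
    by (rule sigma_ext_Sup_le)
  also have "\<dots> \<le> v"
    using assms(2) by (auto intro: Sup_least)
  finally show ?thesis .
qed

lemma sigma_ext_le_pi_ext_if_sigma_ext_diab_le:
  assumes church_rosser: "\<forall>p. dia (box p) \<le> box (dia p)"
    and "sigma_ext e dia (diab e box u) \<le> v"
  shows "sigma_ext e dia u \<le> pi_ext e box v"
proof -
  have "sigma_closed e dia c \<le> pi_open e box w"
    if c: "c \<in> closed_elems e" "c \<le> u" and w: "w \<in> open_elems e" "v \<le> w" for c w
  proof -
    have diab_c_closed: "diab e box c \<in> closed_elems e"
      using diab_closed[OF c(1)] Inf_image_closed by simp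
    have "sigma_closed e dia (diab e box c) \<le> sigma_ext e dia (diab e box u)"
      using diab_c_closed diab_mono[OF c(2)] by (rule sigma_closed_le_sigma_ext)
    also have "\<dots> \<le> w" using assms(2) w(2) by (rule order_trans)
    finally obtain a where "diab e box c \<le> e a" "e (dia a) \<le> w"
      using w(1) sigma_closed_le_openE by blast
    then have "c \<le> e (box a)" using diab_closed_le_iff[OF c(1)] by simp
    then have "sigma_closed e dia c \<le> e (dia (box a))"
      unfolding sigma_closed_def by (auto intro: Inf_lower)
    also have "\<dots> \<le> e (box (dia a))" using church_rosser by simp
    also have "\<dots> \<le> pi_open e box w"
      unfolding pi_open_def using \<open>e (dia a) \<le> w\<close> by (auto intro: Sup_upper)
    finally show ?thesis .
  qed
  then show ?thesis
    unfolding sigma_ext_eq_Sup_sigma_closed pi_ext_eq_Inf_pi_open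
    by (auto intro!: Sup_least Inf_greatest)
qed

end

lemma seq_valid_fresh_nominal:
  assumes valid: "seq_valid J M
      (\<Gamma> \<union> {\<lambda>\<sigma>. nom \<sigma> k \<le> f (nom \<sigma> j)}) ({\<lambda>\<sigma>. g (nom \<sigma> k) \<le> conom \<sigma> m} \<union> \<Delta>)"
    and "k \<noteq> j" and fresh: "\<forall>\<phi>\<in>\<Gamma> \<union> \<Delta>. nom_free J k \<phi>"
    and "admissible J M \<sigma>" "\<forall>\<phi>\<in>\<Gamma>. \<phi> \<sigma>" "\<forall>\<phi>\<in>\<Delta>. \<not> \<phi> \<sigma>"
    and "x \<in> J" "x \<le> f (nom \<sigma> j)"
  shows "g x \<le> conom \<sigma> m"
proof -
  define \<sigma>' where "\<sigma>' = \<sigma>\<lparr>nom := (nom \<sigma>)(k := x)\<rparr>"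
  have unchanged: "\<phi> \<sigma>' = \<phi> \<sigma>" if "\<phi> \<in> \<Gamma> \<union> \<Delta>" for \<phi>
    using fresh that \<open>x \<in> J\<close> unfolding nom_free_def \<sigma>'_def by blast
  have "admissible J M \<sigma>'"
    using \<open>admissible J M \<sigma>\<close> \<open>x \<in> J\<close> unfolding admissible_def \<sigma>'_def by auto
  moreover have "\<forall>\<phi>\<in>\<Gamma> \<union> {\<lambda>\<sigma>. nom \<sigma> k \<le> f (nom \<sigma> j)}. \<phi> \<sigma>'"
    using unchanged assms(2,5,8) by (auto simp: \<sigma>'_def)
  ultimately have "\<exists>\<phi>\<in>{\<lambda>\<sigma>. g (nom \<sigma> k) \<le> conom \<sigma> m} \<union> \<Delta>. \<phi> \<sigma>'"
    using valid unfolding seq_valid_def by blast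
  then show ?thesis
    using unchanged assms(6) by (auto simp: \<sigma>'_def)
qed

theorem mainTheorem3:
  fixes dia box :: "'a::bounded_lattice \<Rightarrow> 'a"
    and e :: "'a \<Rightarrow> 'c::complete_lattice"
    and J M :: "'c set"
    and \<Gamma> \<Delta> :: "('c asg \<Rightarrow> bool) set"
    and j k h m :: nat
  assumes "L_algebra dia box"
    and "canonical_extension e"
    and "join_generating J"
    and "meet_generating M"
    and "\<forall>p. dia (box p) \<le> box (dia p)"
    and "k \<noteq> j"
    and "\<forall>\<phi>\<in>\<Gamma> \<union> \<Delta>. nom_free J k \<phi>"
    and "seq_valid J M
           (\<Gamma> \<union> {\<lambda>\<sigma>. nom \<sigma> k \<le> diab e box (nom \<sigma> j)})
           ({\<lambda>\<sigma>. sigma_ext e dia (nom \<sigma> k) \<le> conom \<sigma> m} \<union> \<Delta>)"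
  shows "seq_valid J M
           (\<Gamma> \<union> {\<lambda>\<sigma>. nom \<sigma> h \<le> sigma_ext e dia (nom \<sigma> j)})
           ({\<lambda>\<sigma>. diab e box (nom \<sigma> h) \<le> conom \<sigma> m} \<union> \<Delta>)"
proof -
  interpret L_canonical_ext e dia box
    using assms(1,2) by unfold_locales
  show ?thesis
    unfolding seq_valid_def
  proof (intro allI impI)
    fix \<sigma> :: "'c asg"
    assume adm: "admissible J M \<sigma>"
      and sat: "\<forall>\<phi>\<in>\<Gamma> \<union> {\<lambda>\<sigma>. nom \<sigma> h \<le> sigma_ext e dia (nom \<sigma> j)}. \<phi> \<sigma>"
    show "\<exists>\<phi>\<in>{\<lambda>\<sigma>. diab e box (nom \<sigma> h) \<le> conom \<sigma> m} \<union> \<Delta>. \<phi> \<sigma>"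
    proof (cases "\<exists>\<phi>\<in>\<Delta>. \<phi> \<sigma>")
      case False
      let ?b = "diab e box (nom \<sigma> j)"
      have "\<forall>x\<in>J. x \<le> ?b \<longrightarrow> sigma_ext e dia x \<le> conom \<sigma> m"
        using seq_valid_fresh_nominal[OF assms(8,6,7) adm] sat False by blast
      then have "sigma_ext e dia ?b \<le> conom \<sigma> m"
        by (rule sigma_ext_le_if_join_generating[OF assms(3)])
      then have "sigma_ext e dia (nom \<sigma> j) \<le> pi_ext e box (conom \<sigma> m)"
        using assms(5) by (rule sigma_ext_le_pi_ext_if_sigma_ext_diab_le[rotated])
      then have "diab e box (nom \<sigma> h) \<le> conom \<sigma> m"
        using sat by (auto intro: diab_le order_trans)
      then show ?thesis by simp
    qed blast
  qed
qed

end
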